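(* Let $x\le w$ in $W$ with $\ell(w)-\ell(x)=d\ge1$, $\mathfrak w=s_1\cdots s_n$ a reduced word of $w$, $\lambda(\mathscr C^+_{x,\mathfrak w})=(i_1,\ldots,i_d)$ and $\lambda(\mathscr C^-_{x,\mathfrak w})^*=(j_1,\ldots,j_d)$. Let $s_1\mathfrak w=s_2\cdots s_n$, a reduced word of $s_1w$ whose positions are numbered $1,\ldots,n-1$. If $j_1=1$, then $x\le s_1w$ and $\lambda_{x,s_1\mathfrak w}=\{\,i-1 : i\in\lambda_{x,\mathfrak w},\ i\ne1\,\}$. If $i_1>1$, then $s_1x\le s_1w$ and $\lambda_{s_1x,s_1\mathfrak w}\supseteq\{\,i-1 : i\in\lambda_{x,\mathfrak w}\,\}$.
   Context: Let $W$ be the Weyl group of a finite reduced root system, with length $\ell$ and Bruhat order $\le$. For a reduced word $\mathfrak w=s_1\cdots s_n$ of $w$ and $x\le w$, $\lambda_{x,\mathfrak w}$ is the set of positions $i$ with $x\le s_1\cdots\widehat{s_i}\cdots s_n$ (regarded as a set, or as an increasing tuple). Each maximal chain $\mathscr C: w=w_0\to\cdots\to w_d=x$ of Bruhat covers in $[x,w]$ has label $\lambda(\mathscr C)=(i_1,\ldots,i_d)$, the unique sequence of distinct positions such that $w_k$ is obtained from $\mathfrak w$ by deleting $s_{i_1},\ldots,s_{i_k}$. $\mathscr C^+_{x,\mathfrak w}$ (resp. $\mathscr C^-_{x,\mathfrak w}$) is the unique maximal chain with strictly increasing (resp. strictly decreasing) label; by Björner–Wachs shellability these are respectively lexicographically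 smallest and largest. For a tuple $\lambda=(a_1,\ldots,a_d)$, $\lambda^*=(a_d,\ldots,a_1)$. *)

theory Defs
  imports "HOL-Analysis.Analysis"
begin

definition refl :: "'v::euclidean_space \<Rightarrow> 'v \<Rightarrow> 'v" where
  "refl a v = v - (2 * (v \<bullet> a) / (a \<bullet> a)) *\<^sub>R a"

definition root_system :: "'v::euclidean_space set \<Rightarrow> bool" where
  "root_system R \<longleftrightarrow> finite R \<and> 0 \<notin> R \<and> span R = UNIV \<and>
     (\<forall>a\<in>R. \<forall>b\<in>R. refl a b \<in> R \<and> 2 * (b \<bullet> a) / (a \<bullet> a) \<in> \<int>) \<and>
     (\<forall>a\<in>R. \<forall>c::real. c *\<^sub>R a \<in> R \<longrightarrow> c = 1 \<or> c = -1)"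

definition is_base :: "'v::euclidean_space set \<Rightarrow> 'v set \<Rightarrow> bool" where
  "is_base R D \<longleftrightarrow> D \<subseteq> R \<and> independent D \<and>
     (\<forall>b\<in>R. \<exists>c::'v \<Rightarrow> nat.
        b = (\<Sum>d\<in>D. real (c d) *\<^sub>R d) \<or> b = - (\<Sum>d\<in>D. real (c d) *\<^sub>R d))"

inductive_set weyl :: "'v::euclidean_space set \<Rightarrow> ('v \<Rightarrow> 'v) set" for R where
  weyl_id: "id \<in> weyl R"
| weyl_step: "a \<in> R \<Longrightarrow> u \<in> weyl R \<Longrightarrow> refl a \<circ> u \<in> weyl R"

definition prodW :: "('v \<Rightarrow> 'v) list \<Rightarrow> ('v \<Rightarrow> 'v)" where
  "prodW ws = foldr (\<circ>) ws id"

definition ell :: "'v::euclidean_space set \<Rightarrow> ('v \<Rightarrow> 'v) \<Rightarrow> nat" where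
  "ell D w = (LEAST n. \<exists>ws. set ws \<subseteq> refl ` D \<and> length ws = n \<and> prodW ws = w)"

definition reduced_word :: "'v::euclidean_space set \<Rightarrow> ('v \<Rightarrow> 'v) list \<Rightarrow> ('v \<Rightarrow> 'v) \<Rightarrow> bool" where
  "reduced_word D ws w \<longleftrightarrow> set ws \<subseteq> refl ` D \<and> prodW ws = w \<and> length ws = ell D w"

definition bruhat :: "'v::euclidean_space set \<Rightarrow> 'v set \<Rightarrow> ('v \<Rightarrow> 'v) \<Rightarrow> ('v \<Rightarrow> 'v) \<Rightarrow> bool" where
  "bruhat R D x w \<longleftrightarrow> x \<in> weyl R \<and>
     (\<lambda>u v. \<exists>a\<in>R. v = refl a \<circ> u \<and> ell D u < ell D v)\<^sup>*\<^sup>* x w"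

definition bcover :: "'v::euclidean_space set \<Rightarrow> 'v set \<Rightarrow> ('v \<Rightarrow> 'v) \<Rightarrow> ('v \<Rightarrow> 'v) \<Rightarrow> bool" where
  "bcover R D u v \<longleftrightarrow> bruhat R D u v \<and> u \<noteq> v \<and>
     (\<forall>z. bruhat R D u z \<and> bruhat R D z v \<longrightarrow> z = u \<or> z = v)"

definition max_chain :: "'v::euclidean_space set \<Rightarrow> 'v set \<Rightarrow> ('v \<Rightarrow> 'v) list \<Rightarrow> ('v \<Rightarrow> 'v) \<Rightarrow> ('v \<Rightarrow> 'v) \<Rightarrow> bool" where
  "max_chain R D c w x \<longleftrightarrow> c \<noteq> [] \<and> c ! 0 = w \<and> last c = x \<and>
     (\<forall>k. Suc k < length c \<longrightarrow> bcover R D (c ! Suc k) (c ! k))"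

text \<open>Deleting the letters at a set of positions (positions numbered from 1).\<close>
definition del_pos :: "nat set \<Rightarrow> 'a list \<Rightarrow> 'a list" where
  "del_pos P ws = map snd (filter (\<lambda>(i, s). i \<notin> P) (zip [1..<Suc (length ws)] ws))"

definition chain_label :: "('v \<Rightarrow> 'v) list \<Rightarrow> ('v \<Rightarrow> 'v) list \<Rightarrow> nat list \<Rightarrow> bool" where
  "chain_label ws c L \<longleftrightarrow> length L + 1 = length c \<and> distinct L \<and>
     set L \<subseteq> {1..length ws} \<and>
     (\<forall>k < length c. c ! k = prodW (del_pos (set (take k L)) ws))"

definition lam :: "'v::euclidean_space set \<Rightarrow> 'v set \<Rightarrow> ('v \<Rightarrow> 'v) \<Rightarrow> ('v \<Rightarrow> 'v) list \<Rightarrow> nat set" where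
  "lam R D x ws = {i \<in> {1..length ws}. bruhat R D x (prodW (del_pos {i} ws))}"

end

theory Submission
  imports Defs
begin

text \<open>Everything rests on the lifting property of the Bruhat order: for a simple reflection \<open>s\<close>,
  the maps \<open>u \<mapsto> min(u, s u)\<close> and \<open>u \<mapsto> max(u, s u)\<close> are monotone.  For the Weyl group of a
  crystallographic root system this follows from the exchange condition, which in turn comes from
  the fact that a simple reflection permutes the positive roots other than its own root.

  If the decreasing chain ends by deleting \<open>s\<^sub>1\<close>, its last-but-one element is \<open>s\<^sub>1 x\<close>, so
  \<open>x < s\<^sub>1 x\<close>; lifting then gives \<open>x \<le> s\<^sub>1 w\<close> and \<open>x \<le> u \<longleftrightarrow> x \<le> s\<^sub>1 u\<close>, which shifts
  \<open>\<lambda>\<close>.  If the increasing chain starts at a position \<open>> 1\<close>, then \<open>x\<close> is a subword beginning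
  with \<open>s\<^sub>1\<close>, so \<open>s\<^sub>1 x < x\<close> and lifting gives \<open>s\<^sub>1 x \<le> s\<^sub>1 u\<close> whenever \<open>x \<le> u\<close>; position
  \<open>1\<close> is not in \<open>\<lambda>\<^sub>x\<^sub>,\<^sub>w\<close> by the lexicographic minimality of the increasing chain.\<close>

section \<open>Reflections\<close>

lemma refl_linear: "linear (refl a)"
  unfolding refl_def
  by (rule linearI) (auto simp: inner_add_left algebra_simps add_divide_distrib diff_divide_distrib)

lemma refl_diff: "refl a (u - v) = refl a u - refl a v"
  using linear_diff[OF refl_linear] by blast
lemma refl_scale: "refl a (c *\<^sub>R u) = c *\<^sub>R refl a u"
  using linear_scale[OF refl_linear] by blast
lemma refl_neg: "refl a (- u) = - refl a u"
  using linear_neg[OF refl_linear] by blast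

lemma inner_refl_root: "a \<noteq> 0 \<Longrightarrow> refl a v \<bullet> a = - (v \<bullet> a)"
  unfolding refl_def by (simp add: inner_diff_left)

lemma refl_root_self: "a \<noteq> 0 \<Longrightarrow> refl a a = - a"
  unfolding refl_def by (simp add: algebra_simps scaleR_2)

lemma refl_refl [simp]: "a \<noteq> 0 \<Longrightarrow> refl a (refl a v) = v"
proof -
  assume a: "a \<noteq> 0"
  have "refl a (refl a v) = refl a v - (2 * (refl a v \<bullet> a) / (a \<bullet> a)) *\<^sub>R a"
    by (simp add: refl_def)
  also have "\<dots> = v" using inner_refl_root[OF a, of v] by (simp add: refl_def)
  finally show ?thesis .
qed

lemma refl_comp_refl: "a \<noteq> 0 \<Longrightarrow> refl a \<circ> refl a = id"
  by (auto simp: fun_eq_iff)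

lemma inner_refl_refl: "a \<noteq> 0 \<Longrightarrow> refl a u \<bullet> refl a v = u \<bullet> v"
  unfolding refl_def
  by (simp add: inner_diff_left inner_diff_right algebra_simps inner_commute)

lemma refl_uminus: "refl (- a) = refl a"
  by (auto simp: fun_eq_iff refl_def)

lemma refl_refl_conj:
  assumes b: "b \<noteq> 0"
  shows "refl (refl b a) = refl b \<circ> refl a \<circ> refl b"
proof
  fix v
  have 1: "v \<bullet> refl b a = refl b v \<bullet> a"
    using inner_refl_refl[OF b, of v "refl b a"] b by simp
  have 2: "refl b a \<bullet> refl b a = a \<bullet> a" using inner_refl_refl[OF b] by simp
  have "(refl b \<circ> refl a \<circ> refl b) v = refl b (refl b v - (2 * (refl b v \<bullet> a) / (a \<bullet> a)) *\<^sub>R a)"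
    by (simp add: refl_def[of a])
  also have "\<dots> = v - (2 * (refl b v \<bullet> a) / (a \<bullet> a)) *\<^sub>R refl b a"
    using b by (simp add: refl_diff refl_scale)
  also have "\<dots> = refl (refl b a) v" using 1 2 by (simp add: refl_def[of "refl b a"])
  finally show "refl (refl b a) v = (refl b \<circ> refl a \<circ> refl b) v" by simp
qed

lemma prodW_Nil [simp]: "prodW [] = id" by (simp add: prodW_def)
lemma prodW_Cons [simp]: "prodW (s # ws) = s \<circ> prodW ws" by (simp add: prodW_def)
lemma prodW_append: "prodW (xs @ ys) = prodW xs \<circ> prodW ys"
  by (induction xs) (auto simp: o_assoc)
lemma prodW_rev_inverse:
  assumes "\<forall>s\<in>set ws. s \<circ> s = id"
  shows "prodW (rev ws) \<circ> prodW ws = id" "prodW ws \<circ> prodW (rev ws) = id"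
proof -
  have "prodW (rev ws) \<circ> prodW ws = id \<and> prodW ws \<circ> prodW (rev ws) = id" using assms
  proof (induction ws)
    case Nil then show ?case by simp
  next
    case (Cons s ws)
    have s: "s \<circ> s = id" using Cons.prems by (meson list.set_intros(1))
    have ws: "\<forall>s\<in>set ws. s \<circ> s = id" using Cons.prems by (meson list.set_intros(2))
    have ih: "prodW (rev ws) \<circ> prodW ws = id" "prodW ws \<circ> prodW (rev ws) = id"
      using Cons.IH[OF ws] by blast+
    have 1: "prodW (rev (s # ws)) \<circ> prodW (s # ws) = id"
    proof -
      have "prodW (rev (s # ws)) \<circ> prodW (s # ws) = prodW (rev ws) \<circ> (s \<circ> s) \<circ> prodW ws"
        by (simp add: prodW_append o_assoc)
      also have "\<dots> = id" using s ih by simp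
      finally show ?thesis .
    qed
    have 2: "prodW (s # ws) \<circ> prodW (rev (s # ws)) = id"
    proof -
      have "prodW (s # ws) \<circ> prodW (rev (s # ws)) = s \<circ> (prodW ws \<circ> prodW (rev ws)) \<circ> s"
        by (simp add: prodW_append o_assoc)
      also have "\<dots> = id" using s ih by simp
      finally show ?thesis .
    qed
    show ?case using 1 2 by blast
  qed
  then show "prodW (rev ws) \<circ> prodW ws = id" "prodW ws \<circ> prodW (rev ws) = id" by blast+
qed

section \<open>Positive roots and simple reflections\<close>

locale based_root_system =
  fixes R D :: "'v::euclidean_space set"
  assumes root_system: "root_system R" and is_base: "is_base R D"
begin

lemma zero_notin_R: "0 \<notin> R" and refl_in_R: "a \<in> R \<Longrightarrow> b \<in> R \<Longrightarrow> refl a b \<in> R"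
  and reduced_R: "a \<in> R \<Longrightarrow> c *\<^sub>R a \<in> R \<Longrightarrow> c = 1 \<or> c = -1"
  using root_system unfolding root_system_def by auto

lemma D_subset_R: "D \<subseteq> R" and independent_D: "independent D"
  and root_base_expansion: "b \<in> R \<Longrightarrow> \<exists>c::'v \<Rightarrow> nat. b = (\<Sum>d\<in>D. real (c d) *\<^sub>R d) \<or> b = - (\<Sum>d\<in>D. real (c d) *\<^sub>R d)"
  using is_base unfolding is_base_def by auto

lemma finite_D: "finite D" using independent_D independent_explicit by blast

lemma zero_notin_D: "0 \<notin> D" using D_subset_R zero_notin_R by auto

lemma root_nonzero: "a \<in> R \<Longrightarrow> a \<noteq> 0" using zero_notin_R by auto
lemma simple_nonzero: "a \<in> D \<Longrightarrow> a \<noteq> 0" using zero_notin_D by auto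

lemma uminus_in_R: "a \<in> R \<Longrightarrow> - a \<in> R"
  using refl_in_R[of a a] refl_root_self[of a] root_nonzero by auto

lemma base_coeffs_unique:
  assumes "(\<Sum>d\<in>D. f d *\<^sub>R d) = (\<Sum>d\<in>D. g d *\<^sub>R d)" "x \<in> D"
  shows "f x = g x"
proof -
  have "(\<Sum>d\<in>D. (f d - g d) *\<^sub>R d) = 0"
    using assms(1) by (simp add: scaleR_diff_left sum_subtractf)
  moreover have H: "\<And>c v. (\<Sum>v\<in>D. c v *\<^sub>R v) = 0 \<Longrightarrow> v \<in> D \<Longrightarrow> c v = 0"
    using independent_D unfolding independent_explicit by blast
  ultimately have "f x - g x = 0" using assms(2) H[of "\<lambda>d. f d - g d" x] by blast
  then show ?thesis by simp
qed

definition pos_root :: "'v \<Rightarrow> bool" where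
  "pos_root b \<longleftrightarrow> b \<in> R \<and> (\<exists>c::'v \<Rightarrow> nat. b = (\<Sum>d\<in>D. real (c d) *\<^sub>R d))"

definition neg_root :: "'v \<Rightarrow> bool" where
  "neg_root b \<longleftrightarrow> pos_root (- b)"

lemma pos_root_in_R: "pos_root b \<Longrightarrow> b \<in> R" by (simp add: pos_root_def)
lemma pos_or_neg_root: "b \<in> R \<Longrightarrow> pos_root b \<or> neg_root b"
  using root_base_expansion[of b] uminus_in_R[of b] by (auto simp: pos_root_def neg_root_def)

lemma not_pos_and_neg_root: "pos_root b \<Longrightarrow> neg_root b \<Longrightarrow> False"
proof -
  assume "pos_root b" "neg_root b"
  then obtain c e :: "'v \<Rightarrow> nat" where b: "b \<in> R" "b = (\<Sum>d\<in>D. real (c d) *\<^sub>R d)"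
    and e: "- b = (\<Sum>d\<in>D. real (e d) *\<^sub>R d)" by (auto simp: pos_root_def neg_root_def)
  have "(\<Sum>d\<in>D. (real (c d) + real (e d)) *\<^sub>R d) = (\<Sum>d\<in>D. 0 *\<^sub>R d)"
    using b e[symmetric] by (simp add: scaleR_add_left sum.distrib)
  then have "\<forall>d\<in>D. real (c d) + real (e d) = 0" using base_coeffs_unique[of "\<lambda>d. real (c d) + real (e d)" "\<lambda>d. 0"] by auto
  then have "\<forall>d\<in>D. c d = 0" by auto
  then have "b = 0" using b by simp
  then show False using b zero_notin_R by simp
qed

lemma sum_base_delta: "d \<in> D \<Longrightarrow> (\<Sum>x\<in>D. (if x = d then k else 0) *\<^sub>R x) = k *\<^sub>R d"
proof -
  assume d: "d \<in> D"
  have "(\<Sum>x\<in>D. (if x = d then k else 0) *\<^sub>R x) = (\<Sum>x\<in>D. if x = d then k *\<^sub>R d else 0)"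
    by (rule sum.cong) auto
  also have "\<dots> = k *\<^sub>R d" using d finite_D by simp
  finally show ?thesis .
qed

lemma refl_simple_pos_root:
  assumes d: "d \<in> D" and b: "pos_root b" and bd: "b \<noteq> d"
  shows "pos_root (refl d b)"
proof (rule ccontr)
  assume npos: "\<not> pos_root (refl d b)"
  obtain c :: "'v \<Rightarrow> nat" where bR: "b \<in> R" and bc: "b = (\<Sum>x\<in>D. real (c x) *\<^sub>R x)"
    using b by (auto simp: pos_root_def)
  have dR: "d \<in> R" using d D_subset_R by auto
  have ex: "\<exists>d'\<in>D. d' \<noteq> d \<and> c d' > 0"
  proof (rule ccontr)
    assume "\<not> ?thesis"
    then have "\<forall>x\<in>D. x \<noteq> d \<longrightarrow> c x = 0" by auto
    then have "b = (\<Sum>x\<in>D. (if x = d then real (c d) else 0) *\<^sub>R x)"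
      unfolding bc by (intro sum.cong) auto
    also have "\<dots> = real (c d) *\<^sub>R d" using sum_base_delta[OF d] by simp
    finally have bd': "b = real (c d) *\<^sub>R d" .
    have "real (c d) *\<^sub>R d \<in> R" using bR bd' by simp
    from reduced_R[OF dR this] have "real (c d) = 1 \<or> real (c d) = -1" .
    then have "real (c d) = 1" by auto
    then show False using bd' bd by simp
  qed
  then obtain d' where d': "d' \<in> D" "d' \<noteq> d" "c d' > 0" by blast
  have rR: "refl d b \<in> R" using refl_in_R[OF dR bR] .
  then have "neg_root (refl d b)" using pos_or_neg_root npos by blast
  then obtain e :: "'v \<Rightarrow> nat" where e: "- refl d b = (\<Sum>x\<in>D. real (e x) *\<^sub>R x)"
    by (auto simp: neg_root_def pos_root_def)
  define k where "k = 2 * (b \<bullet> d) / (d \<bullet> d)"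
  have rb: "refl d b = b - k *\<^sub>R d" by (simp add: refl_def k_def)
  have "(\<Sum>x\<in>D. (real (c x) - (if x = d then k else 0) + real (e x)) *\<^sub>R x)
      = (\<Sum>x\<in>D. real (c x) *\<^sub>R x) - (\<Sum>x\<in>D. (if x = d then k else 0) *\<^sub>R x) + (\<Sum>x\<in>D. real (e x) *\<^sub>R x)"
    by (simp add: scaleR_add_left scaleR_diff_left sum.distrib sum_subtractf)
  also have "\<dots> = 0" using sum_base_delta[OF d, of k] e[symmetric] bc[symmetric] rb by simp
  finally have "(\<Sum>x\<in>D. (real (c x) - (if x = d then k else 0) + real (e x)) *\<^sub>R x) = (\<Sum>x\<in>D. 0 *\<^sub>R x)"
    by simp
  from base_coeffs_unique[OF this d'(1)] have "real (c d') + real (e d') = 0" using d'(2) by simp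
  then show False using d'(3) by simp
qed

abbreviation simple_word :: "('v \<Rightarrow> 'v) list \<Rightarrow> bool" where
  "simple_word ws \<equiv> set ws \<subseteq> refl ` D"

lemma simple_word_involutions: "simple_word ws \<Longrightarrow> \<forall>s\<in>set ws. s \<circ> s = id"
  using refl_comp_refl simple_nonzero by auto

lemma prodW_rev_simple_word: "simple_word ws \<Longrightarrow> prodW (rev ws) \<circ> prodW ws = id"
  "simple_word ws \<Longrightarrow> prodW ws \<circ> prodW (rev ws) = id"
  using prodW_rev_inverse simple_word_involutions by blast+

lemma prodW_rev_simple_word_apply [simp]: "simple_word ws \<Longrightarrow> prodW (rev ws) (prodW ws v) = v"
  "simple_word ws \<Longrightarrow> prodW ws (prodW (rev ws) v) = v"
  using prodW_rev_simple_word by (metis comp_apply id_apply)+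

lemma simple_word_rev: "simple_word ws \<Longrightarrow> simple_word (rev ws)"
  by simp

lemma prodW_simple_word_uminus: "simple_word ws \<Longrightarrow> prodW ws (- v) = - prodW ws v"
  by (induction ws) (auto simp: refl_neg)

lemma prodW_simple_word_root: "simple_word ws \<Longrightarrow> a \<in> R \<Longrightarrow> prodW ws a \<in> R"
  by (induction ws) (use D_subset_R refl_in_R in auto)

lemma refl_prodW_conj: "simple_word p \<Longrightarrow> refl (prodW p a) = prodW p \<circ> refl a \<circ> prodW (rev p)"
proof (induction p)
  case Nil then show ?case by simp
next
  case (Cons s p)
  then obtain b where b: "b \<in> D" "s = refl b" by auto
  have "refl (prodW (s # p) a) = refl b \<circ> refl (prodW p a) \<circ> refl b"
    using b refl_refl_conj[of b] simple_nonzero by simp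
  also have "\<dots> = prodW (s # p) \<circ> refl a \<circ> prodW (rev (s # p))"
    using Cons b by (simp add: fun_eq_iff prodW_append)
  finally show ?case .
qed

lemma pos_root_height_decrease:
  assumes b: "pos_root b" "b \<notin> D" and bc: "b = (\<Sum>x\<in>D. real (c x) *\<^sub>R x)"
  shows "\<exists>x\<in>D. \<exists>c'::'v \<Rightarrow> nat. pos_root (refl x b) \<and> refl x b = (\<Sum>y\<in>D. real (c' y) *\<^sub>R y)
    \<and> sum c' D < sum c D"
proof -
  have bR: "b \<in> R" using b(1) by (simp add: pos_root_def)
  have "0 < b \<bullet> b" using root_nonzero[OF bR] by simp
  also have "b \<bullet> b = (\<Sum>x\<in>D. real (c x) * (b \<bullet> x))"
    by (subst (2) bc) (simp add: inner_sum_right)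
  finally have "\<exists>x\<in>D. 0 < real (c x) * (b \<bullet> x)"
    using sum_nonpos[of D "\<lambda>x. real (c x) * (b \<bullet> x)"] by (meson not_le)
  then obtain x where x: "x \<in> D" "b \<bullet> x > 0"
    by (auto simp: zero_less_mult_iff)
  have p': "pos_root (refl x b)" using refl_simple_pos_root[OF x(1) b(1)] b(2) x(1) by blast
  then obtain c' :: "'v \<Rightarrow> nat" where c': "refl x b = (\<Sum>y\<in>D. real (c' y) *\<^sub>R y)"
    by (auto simp: pos_root_def)
  define k where "k = 2 * (b \<bullet> x) / (x \<bullet> x)"
  have kpos: "k > 0" using x simple_nonzero[OF x(1)] by (simp add: k_def)
  have rb: "refl x b = b - k *\<^sub>R x" by (simp add: refl_def k_def)
  have "(\<Sum>y\<in>D. (real (c y) - (if y = x then k else 0)) *\<^sub>R y)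
      = (\<Sum>y\<in>D. real (c y) *\<^sub>R y) - (\<Sum>y\<in>D. (if y = x then k else 0) *\<^sub>R y)"
    by (simp add: scaleR_diff_left sum_subtractf)
  also have "\<dots> = (\<Sum>y\<in>D. real (c' y) *\<^sub>R y)" using sum_base_delta[OF x(1), of k] bc rb c' by simp
  finally have eq: "\<forall>y\<in>D. real (c' y) = real (c y) - (if y = x then k else 0)"
    using base_coeffs_unique[of "\<lambda>y. real (c y) - (if y = x then k else 0)" "\<lambda>y. real (c' y)"] by auto
  have "real (sum c' D) = (\<Sum>y\<in>D. real (c y) - (if y = x then k else 0))"
    by (simp add: eq)
  also have "\<dots> = real (sum c D) - k"
    using x(1) finite_D by (simp add: sum_subtractf)
  finally have "sum c' D < sum c D" using kpos by linarith
  then show ?thesis using p' c' x(1) by blast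
qed

lemma pos_root_conj_simple:
  assumes "pos_root b"
  shows "\<exists>p d. simple_word p \<and> d \<in> D \<and> b = prodW p d"
proof -
  obtain c :: "'v \<Rightarrow> nat" where "b = (\<Sum>x\<in>D. real (c x) *\<^sub>R x)"
    using assms by (auto simp: pos_root_def)
  then show ?thesis using assms
  proof (induction "sum c D" arbitrary: b c rule: less_induct)
    case less
    show ?case
    proof (cases "b \<in> D")
      case True then show ?thesis by (intro exI[of _ "[]"] exI[of _ b]) simp
    next
      case False
      obtain x c' where x: "x \<in> D" "pos_root (refl x b)" "refl x b = (\<Sum>y\<in>D. real (c' y) *\<^sub>R y)"
        "sum c' D < sum c D"
        using pos_root_height_decrease[OF less.prems(2) False less.prems(1)] by blast
      then obtain p d where pd: "simple_word p" "d \<in> D" "refl x b = prodW p d"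
        using less.hyps by blast
      have "b = refl x (refl x b)" using simple_nonzero[OF x(1)] by simp
      then have "b = prodW (refl x # p) d" using pd by simp
      then show ?thesis using pd x(1) by (intro exI[of _ "refl x # p"] exI[of _ d]) auto
    qed
  qed
qed

lemma refl_eq_simple_word: "a \<in> R \<Longrightarrow> \<exists>ws. simple_word ws \<and> refl a = prodW ws"
proof -
  assume a: "a \<in> R"
  obtain b where b: "pos_root b" "refl a = refl b"
    using pos_or_neg_root[OF a] refl_uminus[of a] by (metis neg_root_def minus_minus)
  then obtain p d where pd: "simple_word p" "d \<in> D" "b = prodW p d" using pos_root_conj_simple by blast
  have "refl a = prodW (p @ [refl d] @ rev p)"
    using b pd refl_prodW_conj[OF pd(1)] by (simp add: prodW_append o_assoc)
  then show ?thesis using pd by (intro exI[of _ "p @ [refl d] @ rev p"]) auto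
qed

lemma weyl_eq_simple_word: "u \<in> weyl R \<Longrightarrow> \<exists>ws. simple_word ws \<and> prodW ws = u"
proof (induction rule: weyl.induct)
  case weyl_id then show ?case by (intro exI[of _ "[]"]) simp
next
  case (weyl_step a u)
  then obtain ws where ws: "simple_word ws" "prodW ws = u" by blast
  obtain p where p: "simple_word p" "refl a = prodW p" using refl_eq_simple_word[OF weyl_step(1)] by blast
  show ?case using ws p by (intro exI[of _ "p @ ws"]) (simp add: prodW_append)
qed

lemma simple_word_in_weyl: "simple_word ws \<Longrightarrow> prodW ws \<in> weyl R"
proof (induction ws)
  case Nil then show ?case by (metis prodW_Nil weyl.weyl_id)
next
  case (Cons s ws)
  then obtain d where "d \<in> D" "s = refl d" by auto
  moreover have "prodW ws \<in> weyl R" using Cons by simp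
  moreover have "d \<in> R" using D_subset_R calculation by auto
  ultimately have "refl d \<circ> prodW ws \<in> weyl R" using weyl.weyl_step by blast
  then show ?case using \<open>s = refl d\<close> by (simp only: prodW_Cons)
qed

lemma ell_le_length: "simple_word ws \<Longrightarrow> ell D (prodW ws) \<le> length ws"
  unfolding ell_def by (rule Least_le) blast

lemma ell_reduced_word: "u \<in> weyl R \<Longrightarrow> \<exists>ws. simple_word ws \<and> length ws = ell D u \<and> prodW ws = u"
proof -
  assume "u \<in> weyl R"
  then obtain ws where "simple_word ws" "prodW ws = u" using weyl_eq_simple_word by blast
  then have "\<exists>n ws. simple_word ws \<and> length ws = n \<and> prodW ws = u" by blast
  then show ?thesis unfolding ell_def by (rule LeastI_ex)
qed

lemma weyl_left_simple: "u \<in> weyl R \<Longrightarrow> d \<in> D \<Longrightarrow> refl d \<circ> u \<in> weyl R"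
  using weyl.weyl_step D_subset_R by blast

lemma weyl_left_refl: "u \<in> weyl R \<Longrightarrow> a \<in> R \<Longrightarrow> refl a \<circ> u \<in> weyl R"
  using weyl.weyl_step by blast

lemma weyl_right_simple: "u \<in> weyl R \<Longrightarrow> d \<in> D \<Longrightarrow> u \<circ> refl d \<in> weyl R"
proof -
  assume "u \<in> weyl R" "d \<in> D"
  then obtain ws where "simple_word ws" "prodW ws = u" using weyl_eq_simple_word by blast
  then have "u \<circ> refl d = prodW (ws @ [refl d])" by (simp add: prodW_append)
  then show ?thesis using simple_word_in_weyl \<open>simple_word ws\<close> \<open>d \<in> D\<close> by simp
qed

lemma ell_left_le: "u \<in> weyl R \<Longrightarrow> d \<in> D \<Longrightarrow> ell D (refl d \<circ> u) \<le> ell D u + 1"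
proof -
  assume "u \<in> weyl R" "d \<in> D"
  then obtain ws where ws: "simple_word ws" "length ws = ell D u" "prodW ws = u" using ell_reduced_word by blast
  have "ell D (prodW (refl d # ws)) \<le> length (refl d # ws)" using ws \<open>d \<in> D\<close> by (intro ell_le_length) auto
  then show ?thesis using ws by simp
qed

lemma ell_right_le: "u \<in> weyl R \<Longrightarrow> d \<in> D \<Longrightarrow> ell D (u \<circ> refl d) \<le> ell D u + 1"
proof -
  assume "u \<in> weyl R" "d \<in> D"
  then obtain ws where ws: "simple_word ws" "length ws = ell D u" "prodW ws = u" using ell_reduced_word by blast
  have "ell D (prodW (ws @ [refl d])) \<le> length (ws @ [refl d])" using ws \<open>d \<in> D\<close> by (intro ell_le_length) auto
  then show ?thesis using ws by (simp add: prodW_append)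
qed

lemma left_simple_invol: "d \<in> D \<Longrightarrow> refl d \<circ> (refl d \<circ> u) = u"
  using simple_nonzero by (auto simp: fun_eq_iff)
lemma right_simple_invol: "d \<in> D \<Longrightarrow> (u \<circ> refl d) \<circ> refl d = u"
  using simple_nonzero by (auto simp: fun_eq_iff)

lemma ell_left_ge: "u \<in> weyl R \<Longrightarrow> d \<in> D \<Longrightarrow> ell D u \<le> ell D (refl d \<circ> u) + 1"
  using ell_left_le[of "refl d \<circ> u" d] weyl_left_simple left_simple_invol by metis
lemma ell_right_ge: "u \<in> weyl R \<Longrightarrow> d \<in> D \<Longrightarrow> ell D u \<le> ell D (u \<circ> refl d) + 1"
  using ell_right_le[of "u \<circ> refl d" d] weyl_right_simple right_simple_invol by metis

section \<open>Exchange\<close>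

lemma exchange_pos_root:
  "simple_word ws \<Longrightarrow> pos_root b \<Longrightarrow> neg_root (prodW (rev ws) b) \<Longrightarrow>
    \<exists>i<length ws. refl b \<circ> prodW ws = prodW (take i ws @ drop (Suc i) ws)"
proof (induction ws arbitrary: b)
  case Nil then show ?case using not_pos_and_neg_root by simp
next
  case (Cons s ws)
  then obtain a where a: "a \<in> D" "s = refl a" and ws: "simple_word ws" by auto
  have a0: "a \<noteq> 0" using simple_nonzero a by auto
  show ?case
  proof (cases "b = a")
    case True
    then show ?thesis using a a0 by (intro exI[of _ 0]) (auto simp: fun_eq_iff)
  next
    case False
    have pb: "pos_root (refl a b)" using refl_simple_pos_root[OF a(1) Cons.prems(2) False] .
    have "neg_root (prodW (rev ws) (refl a b))" using Cons.prems(3) a by (simp add: prodW_append)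
    from Cons.IH[OF ws pb this] obtain i where i: "i < length ws"
      "refl (refl a b) \<circ> prodW ws = prodW (take i ws @ drop (Suc i) ws)" by blast
    have "refl b \<circ> prodW (s # ws) = refl a \<circ> (refl (refl a b) \<circ> prodW ws)"
      using a a0 refl_refl_conj[OF a0, of b] by (simp add: fun_eq_iff)
    also have "\<dots> = prodW (take (Suc i) (s # ws) @ drop (Suc (Suc i)) (s # ws))"
      using i a by simp
    finally have "refl b \<circ> prodW (s # ws) = prodW (take (Suc i) (s # ws) @ drop (Suc (Suc i)) (s # ws))" .
    moreover have "Suc i < length (s # ws)" using i by simp
    ultimately show ?thesis by blast
  qed
qed

lemma prodW_rev_cong: "simple_word ws1 \<Longrightarrow> simple_word ws2 \<Longrightarrow> prodW ws1 = prodW ws2 \<Longrightarrow> prodW (rev ws1) x = prodW (rev ws2) x"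
proof -
  assume h: "simple_word ws1" "simple_word ws2" "prodW ws1 = prodW ws2"
  have "prodW (rev ws1) x = prodW (rev ws1) (prodW ws2 (prodW (rev ws2) x))" using h(2) by simp
  also have "\<dots> = prodW (rev ws1) (prodW ws1 (prodW (rev ws2) x))" using h(3) by simp
  also have "\<dots> = prodW (rev ws2) x" using h(1) by simp
  finally show ?thesis .
qed

lemma simple_word_delete: "simple_word ws \<Longrightarrow> simple_word (take i ws @ drop (Suc i) ws)"
  using set_take_subset set_drop_subset by fastforce

lemma ell_less_refl_pos_root:
  assumes ws: "simple_word ws" and b: "pos_root b" and p: "pos_root (prodW (rev ws) b)"
  shows "ell D (prodW ws) < ell D (refl b \<circ> prodW ws)"
proof -
  have bR: "b \<in> R" using b pos_root_in_R by auto
  have b0: "b \<noteq> 0" using bR root_nonzero by auto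
  let ?v = "refl b \<circ> prodW ws"
  have vW: "?v \<in> weyl R" using weyl_left_refl[OF simple_word_in_weyl[OF ws] bR] .
  obtain rw where rw: "simple_word rw" "length rw = ell D ?v" "prodW rw = ?v" using ell_reduced_word[OF vW] by blast
  obtain pb where pb: "simple_word pb" "refl b = prodW pb" using refl_eq_simple_word[OF bR] by blast
  have "prodW rw = prodW (pb @ ws)" using rw pb by (simp add: prodW_append)
  then have "prodW (rev rw) x = prodW (rev (pb @ ws)) x" for x
    using rw pb ws by (intro prodW_rev_cong) auto
  then have "prodW (rev rw) b = prodW (rev ws) (prodW (rev pb) b)" by (simp add: prodW_append)
  also have "prodW (rev pb) b = prodW (rev pb) (prodW pb (refl b b))"
  proof -
    have "prodW pb (refl b b) = b" using pb b0 by (metis refl_refl)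
    then show ?thesis by simp
  qed
  also have "\<dots> = - b" using pb refl_root_self[OF b0] by simp
  finally have "prodW (rev rw) b = - prodW (rev ws) b" using prodW_simple_word_uminus[OF simple_word_rev[OF ws]] by simp
  then have "neg_root (prodW (rev rw) b)" using p by (simp add: neg_root_def)
  from exchange_pos_root[OF rw(1) b this] obtain i where i: "i < length rw"
    "refl b \<circ> prodW rw = prodW (take i rw @ drop (Suc i) rw)" by blast
  have "refl b \<circ> prodW rw = prodW ws" using rw b0 by (simp add: fun_eq_iff)
  then have "ell D (prodW ws) \<le> length rw - 1"
    using ell_le_length[OF simple_word_delete[OF rw(1), of i]] i by simp
  then show ?thesis using i rw by linarith
qed

lemma refl_pos_root_rep: "a \<in> R \<Longrightarrow> \<exists>b. pos_root b \<and> refl a = refl b"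
  using pos_or_neg_root refl_uminus by (metis neg_root_def minus_minus)

lemma strong_exchange:
  assumes ws: "simple_word ws" and a: "a \<in> R" and lt: "ell D (refl a \<circ> prodW ws) < ell D (prodW ws)"
  shows "\<exists>i<length ws. refl a \<circ> prodW ws = prodW (take i ws @ drop (Suc i) ws)"
proof -
  obtain b where b: "pos_root b" "refl a = refl b" using refl_pos_root_rep[OF a] by blast
  have "prodW (rev ws) b \<in> R" using prodW_simple_word_root[OF simple_word_rev[OF ws] pos_root_in_R[OF b(1)]] .
  moreover have "\<not> pos_root (prodW (rev ws) b)" using ell_less_refl_pos_root[OF ws b(1)] lt b(2) by fastforce
  ultimately have "neg_root (prodW (rev ws) b)" using pos_or_neg_root by blast
  from exchange_pos_root[OF ws b(1) this] show ?thesis using b(2) by simp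
qed

lemma ell_refl_neq:
  assumes u: "u \<in> weyl R" and a: "a \<in> R"
  shows "ell D (refl a \<circ> u) \<noteq> ell D u"
proof -
  obtain b where b: "pos_root b" "refl a = refl b" using refl_pos_root_rep[OF a] by blast
  obtain ws where ws: "simple_word ws" "length ws = ell D u" "prodW ws = u" using ell_reduced_word[OF u] by blast
  have "prodW (rev ws) b \<in> R" using prodW_simple_word_root[OF simple_word_rev[OF ws(1)] pos_root_in_R[OF b(1)]] .
  then consider "pos_root (prodW (rev ws) b)" | "neg_root (prodW (rev ws) b)" using pos_or_neg_root by blast
  then show ?thesis
  proof cases
    case 1 then show ?thesis using ell_less_refl_pos_root[OF ws(1) b(1)] ws b(2) by auto
  next
    case 2
    from exchange_pos_root[OF ws(1) b(1) this] obtain i where i: "i < length ws"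
      "refl b \<circ> prodW ws = prodW (take i ws @ drop (Suc i) ws)" by blast
    have "ell D (refl b \<circ> prodW ws) \<le> length ws - 1"
      using ell_le_length[OF simple_word_delete[OF ws(1), of i]] i by simp
    then show ?thesis using ws b i by auto
  qed
qed

section \<open>Bruhat order\<close>

definition bstep :: "('v \<Rightarrow> 'v) \<Rightarrow> ('v \<Rightarrow> 'v) \<Rightarrow> bool" where
  "bstep u v \<longleftrightarrow> (\<exists>a\<in>R. v = refl a \<circ> u \<and> ell D u < ell D v)"

lemma bruhat_iff: "bruhat R D x w \<longleftrightarrow> x \<in> weyl R \<and> bstep\<^sup>*\<^sup>* x w"
  unfolding bruhat_def bstep_def by simp

lemma bstep_rtranclp_weyl: "bstep\<^sup>*\<^sup>* x w \<Longrightarrow> x \<in> weyl R \<Longrightarrow> w \<in> weyl R"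
  by (induction rule: rtranclp_induct) (auto simp: bstep_def intro: weyl_left_refl)

lemma bstep_rtranclp_ell: "bstep\<^sup>*\<^sup>* x w \<Longrightarrow> ell D x \<le> ell D w \<and> (x \<noteq> w \<longrightarrow> ell D x < ell D w)"
  by (induction rule: rtranclp_induct) (auto simp: bstep_def)

lemma bruhat_weyl: "bruhat R D x w \<Longrightarrow> x \<in> weyl R \<and> w \<in> weyl R"
  using bstep_rtranclp_weyl bruhat_iff by blast

lemma bruhat_ell_less: "bruhat R D x w \<Longrightarrow> x \<noteq> w \<Longrightarrow> ell D x < ell D w"
  using bstep_rtranclp_ell bruhat_iff by blast

lemma bruhat_refl: "x \<in> weyl R \<Longrightarrow> bruhat R D x x"
  by (simp add: bruhat_iff)

lemma bruhat_trans: "bruhat R D x y \<Longrightarrow> bruhat R D y z \<Longrightarrow> bruhat R D x z"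
  unfolding bruhat_iff by auto

lemma bruhat_refl_step: "x \<in> weyl R \<Longrightarrow> a \<in> R \<Longrightarrow> ell D x < ell D (refl a \<circ> x) \<Longrightarrow> bruhat R D x (refl a \<circ> x)"
  unfolding bruhat_iff bstep_def by auto

lemma bruhat_left_ascent: "u \<in> weyl R \<Longrightarrow> d \<in> D \<Longrightarrow> ell D u < ell D (refl d \<circ> u) \<Longrightarrow> bruhat R D u (refl d \<circ> u)"
  using bruhat_refl_step D_subset_R by blast

lemma bruhat_left_descent: "u \<in> weyl R \<Longrightarrow> d \<in> D \<Longrightarrow> ell D (refl d \<circ> u) < ell D u \<Longrightarrow> bruhat R D (refl d \<circ> u) u"
  using bruhat_left_ascent[of "refl d \<circ> u" d] weyl_left_simple left_simple_invol by metis

lemma right_simple_as_left_refl: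
  assumes u: "u \<in> weyl R" and d: "d \<in> D"
  shows "\<exists>a\<in>R. u \<circ> refl d = refl a \<circ> u"
proof -
  obtain ws where ws: "simple_word ws" "prodW ws = u" using weyl_eq_simple_word[OF u] by blast
  have "refl (prodW ws d) \<circ> prodW ws = prodW ws \<circ> refl d"
    using refl_prodW_conj[OF ws(1), of d] ws(1) by (simp add: fun_eq_iff)
  then have "refl (prodW ws d) \<circ> u = u \<circ> refl d" using ws(2) by simp
  moreover have "prodW ws d \<in> R" using prodW_simple_word_root[OF ws(1)] d D_subset_R by auto
  ultimately show ?thesis by metis
qed

lemma bruhat_right_ascent: "u \<in> weyl R \<Longrightarrow> d \<in> D \<Longrightarrow> ell D u < ell D (u \<circ> refl d) \<Longrightarrow> bruhat R D u (u \<circ> refl d)"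
  using right_simple_as_left_refl bruhat_refl_step by metis

lemma bruhat_right_descent: "u \<in> weyl R \<Longrightarrow> d \<in> D \<Longrightarrow> ell D (u \<circ> refl d) < ell D u \<Longrightarrow> bruhat R D (u \<circ> refl d) u"
  using bruhat_right_ascent[of "u \<circ> refl d" d] weyl_right_simple right_simple_invol by metis

lemma ell_right_simple_neq: "u \<in> weyl R \<Longrightarrow> d \<in> D \<Longrightarrow> ell D (u \<circ> refl d) \<noteq> ell D u"
  using right_simple_as_left_refl ell_refl_neq by metis

lemma ell_left_simple_neq: "u \<in> weyl R \<Longrightarrow> d \<in> D \<Longrightarrow> ell D (refl d \<circ> u) \<noteq> ell D u"
  using ell_refl_neq D_subset_R by blast

section \<open>The lifting property\<close>

lemma left_simple_diamond:
  assumes u: "u \<in> weyl R" and a: "a \<in> R" and v: "v = refl a \<circ> u" and d: "d \<in> D"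
    and h1: "ell D (refl d \<circ> v) < ell D v" and h2: "ell D u + 1 = ell D v" and h3: "ell D (refl d \<circ> u) = ell D v"
  shows "refl d \<circ> u = v"
proof -
  have a0: "a \<noteq> 0" using root_nonzero a by auto
  have vW: "v \<in> weyl R" using v weyl_left_refl u a by simp
  obtain rw where rw: "simple_word rw" "length rw = ell D (refl d \<circ> v)" "prodW rw = refl d \<circ> v"
    using ell_reduced_word weyl_left_simple[OF vW d] by blast
  have lv: "length rw + 1 = ell D v" using rw h1 ell_left_ge[OF vW d] by linarith
  let ?ws = "refl d # rw"
  have ws: "simple_word ?ws" "prodW ?ws = v" using rw d left_simple_invol by auto
  have "refl a \<circ> prodW ?ws = u" using ws v a0 by (simp add: fun_eq_iff)
  then have "ell D (refl a \<circ> prodW ?ws) < ell D (prodW ?ws)" using ws h2 by simp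
  from strong_exchange[OF ws(1) a this] obtain i where i: "i < length ?ws"
    "refl a \<circ> prodW ?ws = prodW (take i ?ws @ drop (Suc i) ?ws)" by blast
  have uu: "u = prodW (take i ?ws @ drop (Suc i) ?ws)" using i \<open>refl a \<circ> prodW ?ws = u\<close> by simp
  show ?thesis
  proof (cases i)
    case 0
    then have "u = refl d \<circ> v" using uu rw by simp
    then show ?thesis using left_simple_invol[OF d] by simp
  next
    case (Suc j)
    then have "u = refl d \<circ> prodW (take j rw @ drop (Suc j) rw)" using uu by simp
    then have "refl d \<circ> u = prodW (take j rw @ drop (Suc j) rw)" using left_simple_invol[OF d] by simp
    then have "ell D (refl d \<circ> u) \<le> length rw - 1" using ell_le_length[OF simple_word_delete[OF rw(1), of j]] i Suc by simp
    then show ?thesis using h3 lv by linarith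
  qed
qed

lemma right_simple_diamond:
  assumes u: "u \<in> weyl R" and a: "a \<in> R" and v: "v = refl a \<circ> u" and d: "d \<in> D"
    and h1: "ell D (v \<circ> refl d) < ell D v" and h2: "ell D u + 1 = ell D v" and h3: "ell D (u \<circ> refl d) = ell D v"
  shows "u \<circ> refl d = v"
proof -
  have a0: "a \<noteq> 0" using root_nonzero a by auto
  have vW: "v \<in> weyl R" using v weyl_left_refl u a by simp
  obtain rw where rw: "simple_word rw" "length rw = ell D (v \<circ> refl d)" "prodW rw = v \<circ> refl d"
    using ell_reduced_word weyl_right_simple[OF vW d] by blast
  have lv: "length rw + 1 = ell D v" using rw h1 ell_right_ge[OF vW d] by linarith
  let ?ws = "rw @ [refl d]"
  have ws: "simple_word ?ws" "prodW ?ws = v" using rw d right_simple_invol by (auto simp: prodW_append)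
  have "refl a \<circ> prodW ?ws = u" using ws v a0 by (simp add: fun_eq_iff)
  then have "ell D (refl a \<circ> prodW ?ws) < ell D (prodW ?ws)" using ws h2 by simp
  from strong_exchange[OF ws(1) a this] obtain i where i: "i < length ?ws"
    "refl a \<circ> prodW ?ws = prodW (take i ?ws @ drop (Suc i) ?ws)" by blast
  have uu: "u = prodW (take i ?ws @ drop (Suc i) ?ws)" using i \<open>refl a \<circ> prodW ?ws = u\<close> by simp
  show ?thesis
  proof (cases "i = length rw")
    case True
    then have "u = v \<circ> refl d" using uu rw by simp
    then show ?thesis using right_simple_invol[OF d] by simp
  next
    case False
    then have il: "i < length rw" using i by simp
    then have "take i ?ws @ drop (Suc i) ?ws = (take i rw @ drop (Suc i) rw) @ [refl d]" by simp
    then have "u = prodW (take i rw @ drop (Suc i) rw) \<circ> refl d" using uu by (simp add: prodW_append o_assoc)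
    then have "u \<circ> refl d = prodW (take i rw @ drop (Suc i) rw)" using right_simple_invol[OF d] by simp
    then have "ell D (u \<circ> refl d) \<le> length rw - 1" using ell_le_length[OF simple_word_delete[OF rw(1), of i]] il by simp
    then show ?thesis using h3 lv by linarith
  qed
qed

lemma bstep_left_simple_cases:
  assumes u: "u \<in> weyl R" and st: "bstep u v" and d: "d \<in> D"
  shows "bruhat R D (refl d \<circ> u) (refl d \<circ> v) \<or> refl d \<circ> u = v"
proof -
  obtain a where a: "a \<in> R" "v = refl a \<circ> u" "ell D u < ell D v" using st by (auto simp: bstep_def)
  have d0: "d \<noteq> 0" using simple_nonzero d by auto
  have vW: "v \<in> weyl R" using a u weyl_left_refl by simp
  have suW: "refl d \<circ> u \<in> weyl R" using weyl_left_simple[OF u d] .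
  have a': "refl d a \<in> R" using refl_in_R a(1) d D_subset_R by auto
  have sv: "refl d \<circ> v = refl (refl d a) \<circ> (refl d \<circ> u)"
    using a(2) refl_refl_conj[OF d0, of a] d0 by (simp add: fun_eq_iff)
  have ne: "ell D (refl d \<circ> v) \<noteq> ell D (refl d \<circ> u)" using ell_refl_neq[OF suW a'] sv by simp
  show ?thesis
  proof (cases "ell D (refl d \<circ> u) < ell D (refl d \<circ> v)")
    case True
    then show ?thesis using bruhat_refl_step[OF suW a'] sv by simp
  next
    case False
    then have gt: "ell D (refl d \<circ> v) < ell D (refl d \<circ> u)" using ne by linarith
    have e1: "ell D (refl d \<circ> u) \<le> ell D u + 1" using ell_left_le[OF u d] .
    have e2: "ell D v \<le> ell D (refl d \<circ> v) + 1" using ell_left_ge[OF vW d] .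
    show ?thesis
      using left_simple_diamond[OF u a(1) a(2) d] gt e1 e2 a(3) by linarith
  qed
qed

lemma bstep_right_simple_cases:
  assumes u: "u \<in> weyl R" and st: "bstep u v" and d: "d \<in> D"
  shows "bruhat R D (u \<circ> refl d) (v \<circ> refl d) \<or> u \<circ> refl d = v"
proof -
  obtain a where a: "a \<in> R" "v = refl a \<circ> u" "ell D u < ell D v" using st by (auto simp: bstep_def)
  have vW: "v \<in> weyl R" using a u weyl_left_refl by simp
  have suW: "u \<circ> refl d \<in> weyl R" using weyl_right_simple[OF u d] .
  have sv: "v \<circ> refl d = refl a \<circ> (u \<circ> refl d)" using a(2) by (simp add: o_assoc)
  have ne: "ell D (v \<circ> refl d) \<noteq> ell D (u \<circ> refl d)" using ell_refl_neq[OF suW a(1)] sv by simp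
  show ?thesis
  proof (cases "ell D (u \<circ> refl d) < ell D (v \<circ> refl d)")
    case True
    then show ?thesis using bruhat_refl_step[OF suW a(1)] sv by simp
  next
    case False
    then have gt: "ell D (v \<circ> refl d) < ell D (u \<circ> refl d)" using ne by linarith
    have e1: "ell D (u \<circ> refl d) \<le> ell D u + 1" using ell_right_le[OF u d] .
    have e2: "ell D v \<le> ell D (v \<circ> refl d) + 1" using ell_right_ge[OF vW d] .
    show ?thesis
      using right_simple_diamond[OF u a(1) a(2) d] gt e1 e2 a(3) by linarith
  qed
qed

lemma bruhat_mono_by_bstep:
  assumes weyl: "\<And>u. u \<in> weyl R \<Longrightarrow> f u \<in> weyl R"
    and step: "\<And>u v. u \<in> weyl R \<Longrightarrow> bstep u v \<Longrightarrow> bruhat R D (f u) (f v)"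
    and xy: "bruhat R D x y"
  shows "bruhat R D (f x) (f y)"
proof -
  have x: "x \<in> weyl R" and st: "bstep\<^sup>*\<^sup>* x y" using xy by (auto simp: bruhat_iff)
  from st show ?thesis
  proof (induction rule: rtranclp_induct)
    case base then show ?case using bruhat_refl weyl[OF x] by blast
  next
    case (step y z)
    have "y \<in> weyl R" using bstep_rtranclp_weyl[OF step(1) x] .
    then show ?case using step.IH step(2) bruhat_trans by (blast intro: assms(2))
  qed
qed

definition min_left :: "'v \<Rightarrow> ('v \<Rightarrow> 'v) \<Rightarrow> ('v \<Rightarrow> 'v)" where
  "min_left d u = (if ell D (refl d \<circ> u) < ell D u then refl d \<circ> u else u)"

definition max_left :: "'v \<Rightarrow> ('v \<Rightarrow> 'v) \<Rightarrow> ('v \<Rightarrow> 'v)" where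
  "max_left d u = (if ell D u < ell D (refl d \<circ> u) then refl d \<circ> u else u)"

definition min_right :: "'v \<Rightarrow> ('v \<Rightarrow> 'v) \<Rightarrow> ('v \<Rightarrow> 'v)" where
  "min_right d u = (if ell D (u \<circ> refl d) < ell D u then u \<circ> refl d else u)"

lemma min_left_le: "u \<in> weyl R \<Longrightarrow> d \<in> D \<Longrightarrow> bruhat R D (min_left d u) u"
  unfolding min_left_def using bruhat_left_descent bruhat_refl by auto

lemma min_left_le_refl: "u \<in> weyl R \<Longrightarrow> d \<in> D \<Longrightarrow> bruhat R D (min_left d u) (refl d \<circ> u)"
proof -
  assume u: "u \<in> weyl R" and d: "d \<in> D"
  have "ell D (refl d \<circ> u) \<noteq> ell D u" using ell_left_simple_neq[OF u d] .
  then show ?thesis unfolding min_left_def using bruhat_left_ascent[OF u d] bruhat_refl weyl_left_simple[OF u d] by auto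
qed

lemma max_left_ge: "u \<in> weyl R \<Longrightarrow> d \<in> D \<Longrightarrow> bruhat R D u (max_left d u)"
  unfolding max_left_def using bruhat_left_ascent bruhat_refl by auto

lemma max_left_ge_refl: "u \<in> weyl R \<Longrightarrow> d \<in> D \<Longrightarrow> bruhat R D (refl d \<circ> u) (max_left d u)"
proof -
  assume u: "u \<in> weyl R" and d: "d \<in> D"
  have "ell D (refl d \<circ> u) \<noteq> ell D u" using ell_left_simple_neq[OF u d] .
  then show ?thesis unfolding max_left_def using bruhat_left_descent[OF u d] bruhat_refl weyl_left_simple[OF u d] by auto
qed

lemma min_right_le: "u \<in> weyl R \<Longrightarrow> d \<in> D \<Longrightarrow> bruhat R D (min_right d u) u"
  unfolding min_right_def using bruhat_right_descent bruhat_refl by auto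

lemma min_right_le_refl: "u \<in> weyl R \<Longrightarrow> d \<in> D \<Longrightarrow> bruhat R D (min_right d u) (u \<circ> refl d)"
proof -
  assume u: "u \<in> weyl R" and d: "d \<in> D"
  have "ell D (u \<circ> refl d) \<noteq> ell D u" using ell_right_simple_neq[OF u d] .
  then show ?thesis unfolding min_right_def using bruhat_right_ascent[OF u d] bruhat_refl weyl_right_simple[OF u d] by auto
qed

lemma bruhat_min_left:
  assumes xy: "bruhat R D x y" and d: "d \<in> D"
  shows "bruhat R D (min_left d x) (min_left d y)"
proof (rule bruhat_mono_by_bstep[OF _ _ xy])
  show "min_left d u \<in> weyl R" if "u \<in> weyl R" for u
    using min_left_le[OF that d] bruhat_weyl by blast
next
  fix u v assume u: "u \<in> weyl R" and st: "bstep u v"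
  have uv: "bruhat R D u v" using u st by (auto simp: bruhat_iff)
  from bstep_left_simple_cases[OF u st d] show "bruhat R D (min_left d u) (min_left d v)"
  proof
    assume "bruhat R D (refl d \<circ> u) (refl d \<circ> v)"
    then have "bruhat R D (min_left d u) (refl d \<circ> v)" using min_left_le_refl[OF u d] bruhat_trans by blast
    moreover have "bruhat R D (min_left d u) v" using min_left_le[OF u d] uv bruhat_trans by blast
    moreover have "min_left d v = v \<or> min_left d v = refl d \<circ> v" by (simp add: min_left_def)
    ultimately show ?thesis by auto
  next
    assume su: "refl d \<circ> u = v"
    have lt: "ell D u < ell D v" using st by (auto simp: bstep_def)
    have "refl d \<circ> v = u" using su left_simple_invol[OF d] by blast
    then have "min_left d u = u" "min_left d v = u" using su lt by (auto simp: min_left_def)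
    then show ?thesis using bruhat_refl[OF u] by simp
  qed
qed

lemma bruhat_max_left:
  assumes xy: "bruhat R D x y" and d: "d \<in> D"
  shows "bruhat R D (max_left d x) (max_left d y)"
proof (rule bruhat_mono_by_bstep[OF _ _ xy])
  show "max_left d u \<in> weyl R" if "u \<in> weyl R" for u
    using max_left_ge[OF that d] bruhat_weyl by blast
next
  fix u v assume u: "u \<in> weyl R" and st: "bstep u v"
  have uv: "bruhat R D u v" and v: "v \<in> weyl R"
    using u st bstep_rtranclp_weyl by (auto simp: bruhat_iff)
  from bstep_left_simple_cases[OF u st d] show "bruhat R D (max_left d u) (max_left d v)"
  proof
    assume "bruhat R D (refl d \<circ> u) (refl d \<circ> v)"
    then have "bruhat R D (refl d \<circ> u) (max_left d v)" using max_left_ge_refl[OF v d] bruhat_trans by blast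
    moreover have "bruhat R D u (max_left d v)" using max_left_ge[OF v d] uv bruhat_trans by blast
    moreover have "max_left d u = u \<or> max_left d u = refl d \<circ> u" by (simp add: max_left_def)
    ultimately show ?thesis by auto
  next
    assume su: "refl d \<circ> u = v"
    have lt: "ell D u < ell D v" using st by (auto simp: bstep_def)
    have "refl d \<circ> v = u" using su left_simple_invol[OF d] by blast
    then have "max_left d u = v" "max_left d v = v" using su lt by (auto simp: max_left_def)
    then show ?thesis using bruhat_refl[OF v] by simp
  qed
qed

lemma bruhat_min_right:
  assumes xy: "bruhat R D x y" and d: "d \<in> D"
  shows "bruhat R D (min_right d x) (min_right d y)"
proof (rule bruhat_mono_by_bstep[OF _ _ xy])
  show "min_right d u \<in> weyl R" if "u \<in> weyl R" for u
    using min_right_le[OF that d] bruhat_weyl by blast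
next
  fix u v assume u: "u \<in> weyl R" and st: "bstep u v"
  have uv: "bruhat R D u v" using u st by (auto simp: bruhat_iff)
  from bstep_right_simple_cases[OF u st d] show "bruhat R D (min_right d u) (min_right d v)"
  proof
    assume "bruhat R D (u \<circ> refl d) (v \<circ> refl d)"
    then have "bruhat R D (min_right d u) (v \<circ> refl d)" using min_right_le_refl[OF u d] bruhat_trans by blast
    moreover have "bruhat R D (min_right d u) v" using min_right_le[OF u d] uv bruhat_trans by blast
    moreover have "min_right d v = v \<or> min_right d v = v \<circ> refl d" by (simp add: min_right_def)
    ultimately show ?thesis by auto
  next
    assume su: "u \<circ> refl d = v"
    have lt: "ell D u < ell D v" using st by (auto simp: bstep_def)
    have "v \<circ> refl d = u" using su right_simple_invol[OF d] by blast
    then have "min_right d u = u" "min_right d v = u" using su lt by (auto simp: min_right_def)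
    then show ?thesis using bruhat_refl[OF u] by simp
  qed
qed

lemma bruhat_below_left_descent:
  assumes "bruhat R D x w" and "d \<in> D"
    and "ell D (refl d \<circ> w) < ell D w" and "ell D x < ell D (refl d \<circ> x)"
  shows "bruhat R D x (refl d \<circ> w)"
  using bruhat_min_left[OF assms(1,2)] assms(3,4) by (simp add: min_left_def)

lemma bruhat_left_descent_mono:
  assumes b: "bruhat R D x w" and d: "d \<in> D" and lt: "ell D (refl d \<circ> x) < ell D x"
  shows "bruhat R D (refl d \<circ> x) (refl d \<circ> w)"
proof -
  have "bruhat R D (min_left d x) (min_left d w)" using bruhat_min_left[OF b d] .
  moreover have "bruhat R D (min_left d w) (refl d \<circ> w)" using min_left_le_refl bruhat_weyl b d by blast
  ultimately show ?thesis using lt by (simp add: min_left_def bruhat_trans)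
qed

lemma bruhat_left_ascent_iff:
  assumes u: "u \<in> weyl R" and d: "d \<in> D" and lt: "ell D x < ell D (refl d \<circ> x)"
  shows "bruhat R D x u \<longleftrightarrow> bruhat R D x (refl d \<circ> u)"
proof -
  have ne: "ell D (refl d \<circ> u) \<noteq> ell D u" using ell_left_simple_neq[OF u d] .
  show ?thesis
  proof (cases "ell D (refl d \<circ> u) < ell D u")
    case True
    then show ?thesis using bruhat_below_left_descent[OF _ d True lt] bruhat_left_descent[OF u d True] bruhat_trans by blast
  next
    case False
    then have gt: "ell D u < ell D (refl d \<circ> u)" using ne by linarith
    have su: "refl d \<circ> u \<in> weyl R" using weyl_left_simple[OF u d] .
    have "ell D (refl d \<circ> (refl d \<circ> u)) < ell D (refl d \<circ> u)" using gt by (simp only: left_simple_invol[OF d])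
    from bruhat_below_left_descent[OF _ d this lt] have "bruhat R D x (refl d \<circ> u) \<Longrightarrow> bruhat R D x u"
      by (simp only: left_simple_invol[OF d])
    then show ?thesis using bruhat_left_ascent[OF u d gt] bruhat_trans by blast
  qed
qed

section \<open>Covers in the Bruhat order\<close>

lemma exists_left_descent:
  assumes v: "v \<in> weyl R" and ell_pos: "ell D v > 0"
  shows "\<exists>d\<in>D. ell D (refl d \<circ> v) < ell D v"
proof -
  obtain ws where ws: "simple_word ws" "length ws = ell D v" "prodW ws = v" using ell_reduced_word[OF v] by blast
  then obtain s vs where svs: "ws = s # vs" using ell_pos by (cases ws) auto
  then obtain d where d: "d \<in> D" "s = refl d" using ws by auto
  have "refl d \<circ> v = prodW vs" using ws svs d left_simple_invol by (metis prodW_Cons)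
  then have "ell D (refl d \<circ> v) \<le> length vs" using ell_le_length ws svs by simp
  moreover have "length vs < ell D v" using ws(2) svs by simp
  ultimately show ?thesis using d(1) by (meson le_less_trans)
qed

lemma bruhat_chain_property:
  "bruhat R D u v \<Longrightarrow> ell D u + 2 \<le> ell D v \<Longrightarrow>
    \<exists>z. bruhat R D u z \<and> bruhat R D z v \<and> ell D u < ell D z \<and> ell D z < ell D v"
proof (induction "ell D v" arbitrary: u v rule: less_induct)
  case less
  have uW: "u \<in> weyl R" and vW: "v \<in> weyl R" using bruhat_weyl less.prems(1) by auto
  obtain d where d: "d \<in> D" "ell D (refl d \<circ> v) < ell D v"
    using exists_left_descent[OF vW] less.prems(2) by auto
  have svW: "refl d \<circ> v \<in> weyl R" using weyl_left_simple[OF vW d(1)] .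
  have sv1: "ell D (refl d \<circ> v) + 1 = ell D v" using d ell_left_ge[OF vW d(1)] by linarith
  have svv: "bruhat R D (refl d \<circ> v) v" using bruhat_left_descent[OF vW d(1) d(2)] .
  have neu: "ell D (refl d \<circ> u) \<noteq> ell D u" using ell_left_simple_neq[OF uW d(1)] .
  show ?case
  proof (cases "ell D u < ell D (refl d \<circ> u)")
    case True
    have "bruhat R D u (refl d \<circ> v)" using bruhat_below_left_descent[OF less.prems(1) d(1) d(2) True] .
    then show ?thesis using svv sv1 less.prems(2) by (intro exI[of _ "refl d \<circ> v"]) auto
  next
    case False
    then have su: "ell D (refl d \<circ> u) < ell D u" using neu by linarith
    have su1: "ell D (refl d \<circ> u) + 1 = ell D u" using su ell_left_ge[OF uW d(1)] by linarith
    have b2: "bruhat R D (refl d \<circ> u) (refl d \<circ> v)" using bruhat_left_descent_mono[OF less.prems(1) d(1) su] .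
    have "ell D (refl d \<circ> u) + 2 \<le> ell D (refl d \<circ> v)" using su1 sv1 less.prems(2) by linarith
    from less.hyps[OF d(2) b2 this] obtain z' where z': "bruhat R D (refl d \<circ> u) z'" "bruhat R D z' (refl d \<circ> v)"
      "ell D (refl d \<circ> u) < ell D z'" "ell D z' < ell D (refl d \<circ> v)" by blast
    have z'W: "z' \<in> weyl R" using bruhat_weyl z'(1) by auto
    have mu: "max_left d (refl d \<circ> u) = u" using su by (simp add: max_left_def left_simple_invol[OF d(1)])
    have mv: "max_left d (refl d \<circ> v) = v" using d(2) by (simp add: max_left_def left_simple_invol[OF d(1)])
    have A: "bruhat R D u (max_left d z')" using bruhat_max_left[OF z'(1) d(1)] mu by simp
    have B: "bruhat R D (max_left d z') v" using bruhat_max_left[OF z'(2) d(1)] mv by simp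
    have nez: "ell D (refl d \<circ> z') \<noteq> ell D z'" using ell_left_simple_neq[OF z'W d(1)] .
    show ?thesis
    proof (cases "ell D z' < ell D (refl d \<circ> z')")
      case True
      then have "max_left d z' = refl d \<circ> z'" by (simp add: max_left_def)
      moreover have "ell D (refl d \<circ> z') \<le> ell D z' + 1" using ell_left_le[OF z'W d(1)] .
      ultimately show ?thesis using A B True z' su1 sv1 by (intro exI[of _ "max_left d z'"]) auto
    next
      case False
      then have mz: "max_left d z' = z'" by (simp add: max_left_def)
      show ?thesis
      proof (cases "ell D u < ell D z'")
        case True
        then show ?thesis using A B mz z' sv1 by (intro exI[of _ z']) auto
      next
        case False
        then have "z' = u" using A mz bruhat_ell_less by fastforce
        then have "bruhat R D u (refl d \<circ> v)" using z'(2) by simp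
        then show ?thesis using svv sv1 less.prems(2) by (intro exI[of _ "refl d \<circ> v"]) auto
      qed
    qed
  qed
qed

lemma bcover_ell:
  assumes c: "bcover R D u v" shows "ell D v = ell D u + 1"
proof -
  have b: "bruhat R D u v" and ne: "u \<noteq> v" and m: "\<forall>z. bruhat R D u z \<and> bruhat R D z v \<longrightarrow> z = u \<or> z = v"
    using c by (auto simp: bcover_def)
  have lt: "ell D u < ell D v" using bruhat_ell_less[OF b ne] .
  show ?thesis
  proof (rule ccontr)
    assume "ell D v \<noteq> ell D u + 1"
    then have "ell D u + 2 \<le> ell D v" using lt by linarith
    from bruhat_chain_property[OF b this] obtain z where z: "bruhat R D u z" "bruhat R D z v"
      "ell D u < ell D z" "ell D z < ell D v" by blast
    then show False using m by fastforce
  qed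
qed

lemma del_pos_Nil [simp]: "del_pos P [] = []"
  by (simp add: del_pos_def)

lemma del_pos_Cons:
  "del_pos P (s # ws) = (if 1 \<in> P then del_pos {i. Suc i \<in> P} ws else s # del_pos {i. Suc i \<in> P} ws)"
proof -
  have u0: "[1..<Suc (Suc (length ws))] = 1 # [Suc 1..<Suc (Suc (length ws))]"
    by (rule upt_conv_Cons) simp
  have u: "[1..<Suc (length (s # ws))] = 1 # map Suc [1..<Suc (length ws)]"
    unfolding map_Suc_upt using u0 by simp
  have f: "filter (\<lambda>(i, s). i \<notin> P) (zip (map Suc xs) ws) = map (\<lambda>(i,s). (Suc i, s)) (filter (\<lambda>(i, s). i \<notin> {i. Suc i \<in> P}) (zip xs ws))" for xs :: "nat list"
    by (induction xs arbitrary: ws) (auto simp: zip_Cons1 split: list.splits)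
  show ?thesis unfolding del_pos_def u
    by (simp add: f del: upt_Suc)
qed

lemma del_pos_snoc:
  "del_pos P (xs @ [s]) = del_pos P xs @ (if Suc (length xs) \<in> P then [] else [s])"
proof -
  have u: "[1..<Suc (length (xs @ [s]))] = [1..<Suc (length xs)] @ [Suc (length xs)]" by simp
  show ?thesis unfolding del_pos_def u by (subst zip_append) (auto simp: Suc_le_eq)
qed

lemma del_pos_empty [simp]: "del_pos {} ws = ws"
  by (induction ws) (simp_all add: del_pos_Cons)

lemma length_del_pos: "length (del_pos P ws) = card ({1..length ws} - P)"
proof (induction ws rule: rev_induct)
  case Nil then show ?case by simp
next
  case (snoc s xs)
  have e: "{1..length (xs @ [s])} - P = ({1..length xs} - P) \<union> ({Suc (length xs)} - P)"
    by auto
  have "card (({1..length xs} - P) \<union> ({Suc (length xs)} - P)) = card ({1..length xs} - P) + card ({Suc (length xs)} - P)"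
    by (rule card_Un_disjoint) auto
  moreover have "card ({Suc (length xs)} - P) = (if Suc (length xs) \<in> P then 0 else 1)" by (simp add: insert_Diff_if)
  moreover have "length (del_pos P (xs @ [s])) = card ({1..length xs} - P) + card ({Suc (length xs)} - P)"
    using snoc calculation(2) by (simp add: del_pos_snoc)
  ultimately show ?case using e by simp
qed

lemma del_pos_cong:
  assumes "P \<inter> {1..length ws} = Q \<inter> {1..length ws}"
  shows "del_pos P ws = del_pos Q ws"
proof -
  have "(\<lambda>(i, s). i \<notin> P) p = (\<lambda>(i, s). i \<notin> Q) p" if p: "p \<in> set (zip [1..<Suc (length ws)] ws)" for p
  proof -
    obtain i s where ps: "p = (i, s)" by (cases p)
    then have "i \<in> set [1..<Suc (length ws)]" using p by (blast dest: set_zip_leftD)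
    then have "i \<in> {1..length ws}" by (auto simp del: upt_Suc)
    then have "(i \<notin> P) = (i \<notin> Q)" using assms by blast
    then show ?thesis using ps by simp
  qed
  then have "filter (\<lambda>(i, s). i \<notin> P) (zip [1..<Suc (length ws)] ws) = filter (\<lambda>(i, s). i \<notin> Q) (zip [1..<Suc (length ws)] ws)"
    by (rule filter_cong[OF refl])
  then show ?thesis unfolding del_pos_def by simp
qed

lemma del_pos_singleton_Cons: "1 < i \<Longrightarrow> del_pos {i} (s # ws) = s # del_pos {i - 1} ws"
proof -
  assume "1 < i"
  then have "{j. Suc j \<in> {i}} = {i - 1}" by (auto simp: set_eq_iff)
  then show ?thesis using \<open>1 < i\<close> by (simp add: del_pos_Cons)
qed

lemma del_pos_one_Cons: "del_pos {1} (s # ws) = ws"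
proof -
  have "del_pos {1} (s # ws) = del_pos {0} ws" by (simp add: del_pos_Cons)
  also have "\<dots> = del_pos {} ws" by (rule del_pos_cong) auto
  finally show ?thesis by simp
qed

lemma sorted_wrt_less_le_last: "sorted_wrt (<) L \<Longrightarrow> y \<in> set L \<Longrightarrow> y \<le> (last L :: nat)"
proof (induction L)
  case Nil then show ?case by simp
next
  case (Cons a L)
  show ?case
  proof (cases L)
    case Nil then show ?thesis using Cons by simp
  next
    case (Cons b L')
    then have ne: "L \<noteq> []" by simp
    have l: "last (a # L) = last L" using ne by simp
    have "last L \<in> set L" using ne by simp
    then have al: "a < last L" using Cons.prems(1) by simp
    show ?thesis using Cons.prems Cons.IH al l by auto
  qed
qed

section \<open>Labels of maximal chains\<close>

lemma length_del_pos_singleton: "1 \<le> i \<Longrightarrow> i \<le> length ws \<Longrightarrow> length (del_pos {i} ws) = length ws - 1"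
  by (simp add: length_del_pos card_Diff_singleton)

lemma simple_word_del_pos: "simple_word ws \<Longrightarrow> simple_word (del_pos P ws)"
  unfolding del_pos_def by (auto dest: set_zip_rightD)

lemma reduced_tl: "simple_word (s # ws) \<Longrightarrow> ell D (prodW (s # ws)) = Suc (length ws) \<Longrightarrow> ell D (prodW ws) = length ws"
proof -
  assume w: "simple_word (s # ws)" and e: "ell D (prodW (s # ws)) = Suc (length ws)"
  obtain d where d: "d \<in> D" "s = refl d" using w by auto
  have ws: "simple_word ws" using w by simp
  have "ell D (refl d \<circ> prodW ws) \<le> ell D (prodW ws) + 1" using ell_left_le[OF simple_word_in_weyl[OF ws] d(1)] .
  then show ?thesis using e d ell_le_length[OF ws] by simp
qed

lemma prodW_del_pos_singleton_inj:
  "simple_word ws \<Longrightarrow> ell D (prodW ws) = length ws \<Longrightarrow> 1 \<le> i \<Longrightarrow> i < j \<Longrightarrow> j \<le> length ws \<Longrightarrow>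
    prodW (del_pos {i} ws) \<noteq> prodW (del_pos {j} ws)"
proof (induction ws arbitrary: i j)
  case Nil then show ?case by simp
next
  case (Cons s ws)
  obtain d where d: "d \<in> D" "s = refl d" using Cons.prems(1) by auto
  have ws: "simple_word ws" using Cons.prems(1) by simp
  have j1: "1 < j" using Cons.prems by simp
  show ?case
  proof (cases "i = 1")
    case True
    show ?thesis
    proof
      assume eq: "prodW (del_pos {i} (s # ws)) = prodW (del_pos {j} (s # ws))"
      then have "prodW ws = s \<circ> prodW (del_pos {j - 1} ws)"
        using True j1 del_pos_one_Cons[of s ws] by (simp add: del_pos_singleton_Cons)
      then have "prodW (s # ws) = prodW (del_pos {j - 1} ws)"
        using d left_simple_invol by simp
      moreover have "ell D (prodW (del_pos {j - 1} ws)) \<le> length (del_pos {j - 1} ws)"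
        using ell_le_length[OF simple_word_del_pos[OF ws]] .
      moreover have "length (del_pos {j - 1} ws) = length ws - 1"
        using length_del_pos_singleton[of "j - 1" ws] Cons.prems j1 by simp
      ultimately have "ell D (prodW (s # ws)) \<le> length ws - 1" by simp
      then show False using Cons.prems(2) unfolding length_Cons by linarith
    qed
  next
    case False
    then have i1: "1 < i" using Cons.prems by simp
    have red: "ell D (prodW ws) = length ws" using reduced_tl[OF Cons.prems(1) Cons.prems(2)[unfolded length_Cons]] .
    have ih: "prodW (del_pos {i - 1} ws) \<noteq> prodW (del_pos {j - 1} ws)"
      using Cons.IH[OF ws red] i1 Cons.prems by simp
    show ?thesis
    proof
      assume eq: "prodW (del_pos {i} (s # ws)) = prodW (del_pos {j} (s # ws))"
      then have "refl d \<circ> prodW (del_pos {i - 1} ws) = refl d \<circ> prodW (del_pos {j - 1} ws)"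
        using i1 j1 d by (simp add: del_pos_singleton_Cons)
      then have "refl d \<circ> (refl d \<circ> prodW (del_pos {i - 1} ws)) = refl d \<circ> (refl d \<circ> prodW (del_pos {j - 1} ws))"
        by simp
      then show False using ih left_simple_invol[OF d(1)] by metis
    qed
  qed
qed

lemma ell_del_pos_snoc:
  assumes xs: "simple_word xs" and d: "d \<in> D" and P: "P \<subseteq> {1..length xs}" and cP: "card P = k"
    and e: "ell D (prodW (del_pos P (xs @ [refl d]))) + k = Suc (length xs)"
  shows "ell D (prodW (del_pos P xs)) + k = length xs"
proof -
  have fP: "finite P" using P finite_subset by blast
  have "del_pos P (xs @ [refl d]) = del_pos P xs @ [refl d]" using P by (auto simp: del_pos_snoc)
  then have eq: "prodW (del_pos P (xs @ [refl d])) = prodW (del_pos P xs) \<circ> refl d" by (simp add: prodW_append)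
  have cW: "prodW (del_pos P xs) \<in> weyl R" using simple_word_in_weyl[OF simple_word_del_pos[OF xs]] .
  have 1: "ell D (prodW (del_pos P xs) \<circ> refl d) \<le> ell D (prodW (del_pos P xs)) + 1"
    using ell_right_le[OF cW d] .
  have "ell D (prodW (del_pos P xs)) \<le> length (del_pos P xs)" using ell_le_length[OF simple_word_del_pos[OF xs]] .
  also have "length (del_pos P xs) = length xs - k" using P cP fP by (simp add: length_del_pos card_Diff_subset)
  finally have 2: "ell D (prodW (del_pos P xs)) \<le> length xs - k" .
  have "k \<le> length xs" using P cP card_mono[of "{1..length xs}" P] by simp
  have e2: "ell D (prodW (del_pos P xs) \<circ> refl d) + k = Suc (length xs)" using e unfolding eq .
  then show ?thesis using 1 2 \<open>k \<le> length xs\<close> by linarith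
qed

definition deletion_graded :: "('v \<Rightarrow> 'v) list \<Rightarrow> nat list \<Rightarrow> bool" where
  "deletion_graded ws L \<longleftrightarrow>
     (\<forall>k \<le> length L. ell D (prodW (del_pos (set (take k L)) ws)) + k = length ws)"

lemma deletion_graded_appendD:
  assumes "deletion_graded ws (L @ M)"
  shows "deletion_graded ws L"
  unfolding deletion_graded_def
proof (intro allI impI)
  fix k assume k: "k \<le> length L"
  then have "k \<le> length (L @ M)" by simp
  from assms[unfolded deletion_graded_def, rule_format, OF this]
  show "ell D (prodW (del_pos (set (take k L)) ws)) + k = length ws" using k by simp
qed

lemma deletion_graded_snoc:
  assumes xs: "simple_word xs" and d: "d \<in> D" and L: "distinct L" "set L \<subseteq> {1..length xs}"
    and g: "deletion_graded (xs @ [refl d]) L"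
  shows "deletion_graded xs L"
  unfolding deletion_graded_def
proof (intro allI impI)
  fix k assume k: "k \<le> length L"
  have P: "set (take k L) \<subseteq> {1..length xs}" using L(2) set_take_subset by fastforce
  have cP: "card (set (take k L)) = k" using L(1) k by (simp add: distinct_card)
  show "ell D (prodW (del_pos (set (take k L)) xs)) + k = length xs"
    using ell_del_pos_snoc[OF xs d P cP] g k by (simp add: deletion_graded_def)
qed

lemma bruhat_min_right_below:
  assumes y: "bruhat R D y (u \<circ> refl d)" and d: "d \<in> D"
  shows "bruhat R D (min_right d y) u"
proof -
  have "u \<circ> refl d \<in> weyl R" using bruhat_weyl[OF y] by blast
  then have "bruhat R D (min_right d (u \<circ> refl d)) u"
    using min_right_le_refl[OF _ d] right_simple_invol[OF d] by metis
  then show ?thesis using bruhat_min_right[OF y d] bruhat_trans by blast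
qed

lemma not_bruhat_del_pos_singleton:
  assumes ws: "simple_word ws" "ell D (prodW ws) = length ws"
    and ia: "1 \<le> i" "i < a" "a \<le> length ws"
    and ea: "ell D (prodW (del_pos {a} ws)) + 1 = length ws"
  shows "\<not> bruhat R D (prodW (del_pos {a} ws)) (prodW (del_pos {i} ws))"
proof
  assume b: "bruhat R D (prodW (del_pos {a} ws)) (prodW (del_pos {i} ws))"
  have "ell D (prodW (del_pos {i} ws)) \<le> length (del_pos {i} ws)"
    using ell_le_length[OF simple_word_del_pos[OF ws(1)]] .
  also have "\<dots> = length ws - 1" using length_del_pos_singleton[of i ws] ia by simp
  finally have "\<not> ell D (prodW (del_pos {a} ws)) < ell D (prodW (del_pos {i} ws))" using ea by linarith
  then have "prodW (del_pos {a} ws) = prodW (del_pos {i} ws)" using bruhat_ell_less[OF b] by blast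
  then show False using prodW_del_pos_singleton_inj[OF ws ia] by simp
qed

lemma min_right_del_pos_snoc_inner:
  assumes xs: "simple_word xs" and d: "d \<in> D" and L: "distinct L" "set L \<subseteq> {1..length xs}"
    and g: "deletion_graded (xs @ [refl d]) L"
  shows "min_right d (prodW (del_pos (set L) (xs @ [refl d]))) = prodW (del_pos (set L) xs)"
proof -
  let ?x' = "prodW (del_pos (set L) xs)"
  have "prodW (del_pos (set L) (xs @ [refl d])) = ?x' \<circ> refl d"
    using L(2) by (auto simp: del_pos_snoc prodW_append)
  moreover have "ell D (?x' \<circ> refl d) + length L = Suc (length xs)"
    using g[unfolded deletion_graded_def, rule_format, of "length L"] calculation by simp
  moreover have "ell D ?x' + length L = length xs"
    using deletion_graded_snoc[OF xs d L g, unfolded deletion_graded_def, rule_format, of "length L"]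
    by simp
  ultimately show ?thesis by (simp add: min_right_def right_simple_invol[OF d])
qed

lemma min_right_del_pos_snoc_last:
  assumes L: "\<forall>y\<in>set L. y < Suc (length xs)"
    and g: "deletion_graded (xs @ [refl d]) (L @ [Suc (length xs)])"
  shows "min_right d (prodW (del_pos (set (L @ [Suc (length xs)])) (xs @ [refl d])))
    = prodW (del_pos (set L) xs)"
proof -
  let ?x = "prodW (del_pos (set (L @ [Suc (length xs)])) (xs @ [refl d]))"
  have "del_pos (set (L @ [Suc (length xs)])) (xs @ [refl d]) = del_pos (set (L @ [Suc (length xs)])) xs"
    by (simp add: del_pos_snoc)
  also have "\<dots> = del_pos (set L) xs" by (rule del_pos_cong) auto
  finally have x: "?x = prodW (del_pos (set L) xs)" by simp
  have "del_pos (set L) (xs @ [refl d]) = del_pos (set L) xs @ [refl d]" using L by (auto simp: del_pos_snoc)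
  then have "?x \<circ> refl d = prodW (del_pos (set L) (xs @ [refl d]))" using x by (simp add: prodW_append)
  moreover have "ell D (prodW (del_pos (set L) (xs @ [refl d]))) + length L = Suc (length xs)"
    "ell D ?x + Suc (length L) = Suc (length xs)"
    using g[unfolded deletion_graded_def, rule_format, of "length L"]
      g[unfolded deletion_graded_def, rule_format, of "Suc (length L)"] by simp_all
  ultimately have "min_right d ?x = ?x" by (simp add: min_right_def)
  then show ?thesis using x by simp
qed

text \<open>The minimality of the increasing chain in the lexicographic order.  The induction removes
  the last letter \<open>refl d\<close> of the word and projects with \<open>min_right d\<close>, which is monotone.\<close>

lemma increasing_label_not_below:
  assumes "simple_word ws" "sorted_wrt (<) L" "L \<noteq> []" "set L \<subseteq> {1..length ws}"
    "deletion_graded ws L" "1 \<le> i" "i < hd L"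
  shows "\<not> bruhat R D (prodW (del_pos (set L) ws)) (prodW (del_pos {i} ws))"
  using assms
proof (induction ws arbitrary: L rule: rev_induct)
  case Nil then show ?case by auto
next
  case (snoc s xs)
  obtain d where d: "d \<in> D" "s = refl d" using snoc.prems(1) by auto
  have xs: "simple_word xs" using snoc.prems(1) by simp
  have "hd L \<le> Suc (length xs)" using snoc.prems(3,4) hd_in_set[of L] by fastforce
  then have "i \<le> length xs" using snoc.prems(7) by simp
  then have "prodW (del_pos {i} (xs @ [s])) = prodW (del_pos {i} xs) \<circ> refl d"
    using d by (auto simp: del_pos_snoc prodW_append)
  then have below: "bruhat R D (min_right d x) (prodW (del_pos {i} xs))"
    if "bruhat R D x (prodW (del_pos {i} (xs @ [s])))" for x
    using bruhat_min_right_below[OF _ d(1)] that by simp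
  show ?case
  proof (cases "last L \<le> length xs")
    case True
    have sub: "set L \<subseteq> {1..length xs}"
      using sorted_wrt_less_le_last[OF snoc.prems(2)] True snoc.prems(4) by fastforce
    have dist: "distinct L" using snoc.prems(2) strict_sorted_iff by blast
    have g: "deletion_graded (xs @ [refl d]) L" using snoc.prems(5) d by simp
    show ?thesis
    proof
      assume "bruhat R D (prodW (del_pos (set L) (xs @ [s]))) (prodW (del_pos {i} (xs @ [s])))"
      from below[OF this] show False
        using snoc.IH[OF xs snoc.prems(2,3) sub deletion_graded_snoc[OF xs d(1) dist sub g] snoc.prems(6,7)]
          min_right_del_pos_snoc_inner[OF xs d(1) dist sub g] d by simp
    qed
  next
    case False
    then have "last L = Suc (length xs)" using snoc.prems(3,4) last_in_set[of L] by fastforce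
    then obtain L' where L: "L = L' @ [Suc (length xs)]"
      using snoc.prems(3) append_butlast_last_id by metis
    show ?thesis
    proof (cases "L' = []")
      case True
      note g = snoc.prems(5)[unfolded deletion_graded_def, rule_format]
      have "ell D (prodW (xs @ [s])) = length (xs @ [s])" using g[of 0] by simp
      from not_bruhat_del_pos_singleton[OF snoc.prems(1) this snoc.prems(6), of "Suc (length xs)"]
      show ?thesis using g[of 1] snoc.prems(7) L True by simp
    next
      case False
      have "sorted_wrt (<) (L' @ [Suc (length xs)])" using snoc.prems(2) L by simp
      then have sL': "sorted_wrt (<) L'" and lt: "\<forall>y\<in>set L'. y < Suc (length xs)"
        by (simp_all add: sorted_wrt_append)
      have sub: "set L' \<subseteq> {1..length xs}" using lt snoc.prems(4) L by fastforce
      have g: "deletion_graded (xs @ [refl d]) (L' @ [Suc (length xs)])" using snoc.prems(5) L d by simp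
      have "distinct L'" using sL' strict_sorted_iff by blast
      then have "deletion_graded xs L'"
        using deletion_graded_snoc[OF xs d(1) _ sub deletion_graded_appendD[OF g]] by blast
      note ih = snoc.IH[OF xs sL' False sub this snoc.prems(6)]
      show ?thesis
      proof
        assume "bruhat R D (prodW (del_pos (set L) (xs @ [s]))) (prodW (del_pos {i} (xs @ [s])))"
        from below[OF this] show False
          using ih snoc.prems(7) min_right_del_pos_snoc_last[OF lt g] L False d by simp
      qed
    qed
  qed
qed

lemma max_chain_label:
  assumes rw: "reduced_word D ws w" and mc: "max_chain R D c w x" and cl: "chain_label ws c L"
  shows "deletion_graded ws L" and "ell D x + length L = length ws"
    and "x = prodW (del_pos (set L) ws)"
proof -
  have lc: "length c = length L + 1" and ck: "\<And>k. k < length c \<Longrightarrow> c ! k = prodW (del_pos (set (take k L)) ws)"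
    using cl by (auto simp: chain_label_def)
  have c0: "c ! 0 = w" and cne: "c \<noteq> []" and lx: "last c = x"
    and cov: "\<And>k. Suc k < length c \<Longrightarrow> bcover R D (c ! Suc k) (c ! k)"
    using mc by (auto simp: max_chain_def)
  have ew: "ell D w = length ws" using rw by (simp add: reduced_word_def)
  have A: "k \<le> length L \<Longrightarrow> ell D (c ! k) + k = length ws" for k
  proof (induction k)
    case 0 then show ?case using c0 ew by simp
  next
    case (Suc k)
    then have "ell D (c ! k) = ell D (c ! Suc k) + 1" using bcover_ell[OF cov] lc by simp
    then show ?case using Suc by simp
  qed
  show "deletion_graded ws L"
    unfolding deletion_graded_def using A ck lc by (metis Suc_eq_plus1 le_imp_less_Suc)
  have last: "x = c ! length L" using cne lc lx by (simp add: last_conv_nth)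
  then show "ell D x + length L = length ws" using A[of "length L"] by simp
  show "x = prodW (del_pos (set L) ws)" using last ck[of "length L"] lc by simp
qed

lemma lam_Cons_left_ascent:
  assumes ws: "simple_word ws" and d: "d \<in> D" and lt: "ell D x < ell D (refl d \<circ> x)"
  shows "lam R D x ws = {i - 1 | i. i \<in> lam R D x (refl d # ws) \<and> i \<noteq> 1}"
proof -
  have shift: "j \<in> lam R D x ws \<longleftrightarrow> Suc j \<in> lam R D x (refl d # ws)" if j: "1 \<le> j" for j
    using bruhat_left_ascent_iff[OF simple_word_in_weyl[OF simple_word_del_pos[OF ws]] d lt] j
    by (auto simp: lam_def del_pos_singleton_Cons)
  show ?thesis
  proof (rule set_eqI, rule iffI)
    fix j assume j: "j \<in> lam R D x ws"
    then have "1 \<le> j" by (simp add: lam_def)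
    then show "j \<in> {i - 1 | i. i \<in> lam R D x (refl d # ws) \<and> i \<noteq> 1}"
      using shift j by force
  next
    fix j assume "j \<in> {i - 1 | i. i \<in> lam R D x (refl d # ws) \<and> i \<noteq> 1}"
    then obtain i where i: "i \<in> lam R D x (refl d # ws)" "i \<noteq> 1" "j = i - 1" by blast
    then have "i = Suc j" "1 \<le> j" by (auto simp: lam_def)
    then show "j \<in> lam R D x ws" using shift i(1) by simp
  qed
qed

lemma lam_Cons_left_descent:
  assumes d: "d \<in> D" and lt: "ell D (refl d \<circ> x) < ell D x" and one: "1 \<notin> lam R D x (refl d # ws)"
  shows "{i - 1 | i. i \<in> lam R D x (refl d # ws)} \<subseteq> lam R D (refl d \<circ> x) ws"
proof
  fix j assume "j \<in> {i - 1 | i. i \<in> lam R D x (refl d # ws)}"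
  then obtain i where i: "i \<in> lam R D x (refl d # ws)" "j = i - 1" by blast
  moreover have "i \<noteq> 1" using i(1) one by blast
  ultimately have ij: "i = Suc j" "1 \<le> j" "j \<le> length ws" by (auto simp: lam_def)
  then have "bruhat R D x (refl d \<circ> prodW (del_pos {j} ws))"
    using i by (simp add: lam_def del_pos_singleton_Cons)
  from bruhat_left_descent_mono[OF this d lt] show "j \<in> lam R D (refl d \<circ> x) ws"
    using ij by (simp add: lam_def left_simple_invol[OF d])
qed

lemma decreasing_label_last_one:
  assumes bxw: "bruhat R D x w" and rw: "reduced_word D ws w"
    and mc: "max_chain R D c w x" and cl: "chain_label ws c L"
    and dec: "sorted_wrt (>) L" and L: "L \<noteq> []" "last L = 1"
  shows "bruhat R D x (prodW (tl ws)) \<and> lam R D x (tl ws) = {i - 1 | i. i \<in> lam R D x ws \<and> i \<noteq> 1}"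
proof -
  note chain = max_chain_label[OF rw mc cl]
  obtain B where LB: "L = B @ [1]" using L append_butlast_last_id by metis
  then have B: "\<forall>y\<in>set B. 1 < y" using dec by (simp add: sorted_wrt_append)
  obtain d ws' where ws: "ws = refl d # ws'" "d \<in> D" "simple_word ws'"
    using rw chain(2) L by (cases ws) (auto simp: reduced_word_def)
  have "del_pos (set L) ws = del_pos {i. i = 0 \<or> Suc i \<in> set B} ws'"
    using LB ws by (simp add: del_pos_Cons)
  also have "\<dots> = del_pos {i. Suc i \<in> set B} ws'" by (rule del_pos_cong) auto
  finally have "del_pos (set L) ws = del_pos {i. Suc i \<in> set B} ws'" .
  moreover have "del_pos (set B) ws = refl d # del_pos {i. Suc i \<in> set B} ws'"
    using B ws by (auto simp: del_pos_Cons)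
  ultimately have "prodW (del_pos (set (take (length B) L)) ws) = refl d \<circ> x"
    using LB chain(3) by simp
  then have "ell D (refl d \<circ> x) + length B = length ws"
    using chain(1)[unfolded deletion_graded_def, rule_format, of "length B"] LB by simp
  then have "ell D x < ell D (refl d \<circ> x)" using chain(2) LB by simp
  moreover have "refl d \<circ> w = prodW ws'" "ell D (refl d \<circ> w) < ell D w"
    using rw ws ell_le_length[OF ws(3)] by (auto simp: reduced_word_def left_simple_invol[OF ws(2)])
  ultimately show ?thesis
    using bruhat_below_left_descent[OF bxw ws(2)] lam_Cons_left_ascent[OF ws(3,2)] ws by auto
qed

lemma increasing_label_hd_gt_one:
  assumes bxw: "bruhat R D x w" and rw: "reduced_word D ws w"
    and mc: "max_chain R D c w x" and cl: "chain_label ws c L"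
    and inc: "sorted_wrt (<) L" and L: "L \<noteq> []" "hd L > 1"
  shows "bruhat R D (hd ws \<circ> x) (prodW (tl ws))
    \<and> {i - 1 | i. i \<in> lam R D x ws} \<subseteq> lam R D (hd ws \<circ> x) (tl ws)"
proof -
  note chain = max_chain_label[OF rw mc cl]
  have setL: "set L \<subseteq> {1..length ws}" using cl by (simp add: chain_label_def)
  obtain d ws' where ws: "ws = refl d # ws'" "d \<in> D" "simple_word ws'"
    using rw chain(2) L by (cases ws) (auto simp: reduced_word_def)
  have "\<forall>y\<in>set L. 1 < y" using inc L by (cases L) auto
  then have "del_pos (set L) ws = refl d # del_pos {i. Suc i \<in> set L} ws'"
    using ws by (auto simp: del_pos_Cons)
  then have sx: "refl d \<circ> x = prodW (del_pos {i. Suc i \<in> set L} ws')"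
    using chain(3) left_simple_invol[OF ws(2)] by simp
  have "card (set L) = length L" using inc strict_sorted_iff distinct_card by blast
  then have "length (del_pos (set L) ws) = length ws - length L"
    using setL by (simp add: length_del_pos card_Diff_subset)
  moreover have "ell D (refl d \<circ> x) \<le> length (del_pos {i. Suc i \<in> set L} ws')"
    using sx ell_le_length[OF simple_word_del_pos[OF ws(3)]] by simp
  ultimately have "ell D (refl d \<circ> x) < ell D x"
    using chain(2) \<open>del_pos (set L) ws = _\<close> by simp
  moreover have "1 \<notin> lam R D x ws"
    using increasing_label_not_below[OF _ inc L(1) setL chain(1) _ L(2)] chain(3) rw
    by (simp add: lam_def reduced_word_def)
  moreover have "refl d \<circ> w = prodW ws'"
    using rw ws left_simple_invol[OF ws(2)] by (auto simp: reduced_word_def)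
  ultimately show ?thesis
    using bruhat_left_descent_mono[OF bxw ws(2)] lam_Cons_left_descent[OF ws(2)] ws by auto
qed

end

theorem lemmaA2:
  fixes R D :: "'v::euclidean_space set"
    and x w :: "'v \<Rightarrow> 'v" and ws cp cm :: "('v \<Rightarrow> 'v) list" and Lp Lm :: "nat list" and d :: nat
  assumes "root_system R" and "is_base R D"
    and "x \<in> weyl R" and "w \<in> weyl R" and "bruhat R D x w"
    and "ell D w - ell D x = d" and "d \<ge> 1"
    and "reduced_word D ws w"
    and "max_chain R D cp w x" and "chain_label ws cp Lp" and "sorted_wrt (<) Lp"
    and "max_chain R D cm w x" and "chain_label ws cm Lm" and "sorted_wrt (>) Lm"
  shows "(last Lm = 1 \<longrightarrow>
            bruhat R D x (prodW (tl ws)) \<and>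
            lam R D x (tl ws) = {i - 1 | i. i \<in> lam R D x ws \<and> i \<noteq> 1})
       \<and> (hd Lp > 1 \<longrightarrow>
            bruhat R D (hd ws \<circ> x) (prodW (tl ws)) \<and>
            {i - 1 | i. i \<in> lam R D x ws} \<subseteq> lam R D (hd ws \<circ> x) (tl ws))"
proof -
  interpret based_root_system R D using assms(1,2) by unfold_locales
  have "ell D w = length ws" using assms(8) by (simp add: reduced_word_def)
  then have "Lp \<noteq> []" "Lm \<noteq> []"
    using max_chain_label(2)[OF assms(8,9,10)] max_chain_label(2)[OF assms(8,12,13)] assms(6,7) by auto
  then show ?thesis
    using decreasing_label_last_one[OF assms(5,8,12,13,14)]
      increasing_label_hd_gt_one[OF assms(5,8,9,10,11)] by blast
qed

end
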